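(* Let $\mathcal{M}=((X,\mathcal{C}),\mathcal{V})$ be a quasi-discrete closure model, $x\in X$, and $\phi_1,\phi_2$ SLCS formulas. Then $\mathcal{M},x\models\phi_1\,\mathcal{S}\,\phi_2$ (path-based semantics) if and only if there exists $A\subseteq X$ with $x\in A$ such that $\mathcal{M},y\models\phi_1$ for all $y\in A$ and $\mathcal{M},z\models\phi_2$ for all $z\in\mathcal{C}(A)\setminus A$.
   Context: A closure space is $(X,\mathcal{C})$ with $\mathcal{C}:\wp(X)\to\wp(X)$, $\mathcal{C}(\emptyset)=\emptyset$, $A\subseteq\mathcal{C}(A)$, $\mathcal{C}(A\cup B)=\mathcal{C}(A)\cup\mathcal{C}(B)$. It is quasi-discrete if there is $R\subseteq X\times X$ with $\mathcal{C}=\mathcal{C}_R$, where $\mathcal{C}_R(A)=A\cup\{x\mid\exists a\in A.(a,x)\in R\}$ (equivalently, $\mathcal{C}(A)=\bigcup_{a\in A}\mathcal{C}(\{a\})$ for all $A$). A function between closure spaces is continuous if $f(\mathcal{C}_1(A))\subseteq\mathcal{C}_2(f(A))$. Paths in a quasi-discrete space are continuous functions $p:(\mathbb{N},\mathcal{C}_\succ)\to(X,\mathcal{C})$ where $\succ=\{(n,n+1)\mid n\in\mathbb{N}\}$. A quasi-discrete closure model is $\mathcal{M}=((X,\mathcal{C}),\mathcal{V})$ with $(X,\mathcal{C})$ quasi-discrete and $\mathcal{V}:AP\to 2^X$. SLCS formulas: $\Phi::=a\mid\top\mid\lnot\Phi\mid\Phi\land\Phi\mid\mathcal{N}\Phi\mid\Phi\,\mathcal{S}\,\Phi\mid\Phi\rightsquigarrow\Phi$,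 with semantics: $x\models a$ iff $x\in\mathcal{V}(a)$; boolean connectives as usual; $x\models\mathcal{N}\phi$ iff $x\in\mathcal{C}(\{y\mid y\models\phi\})$; $x\models\phi_1\,\mathcal{S}\,\phi_2$ iff $x\models\phi_1$ and for every path $p$ with $p(0)=x$ and every $l\in\mathbb{N}$, if $p(l)\models\lnot\phi_1$ then there is $k$ with $0<k\le l$ and $p(k)\models\phi_2$; $x\models\phi_1\rightsquigarrow\phi_2$ iff $x\models\phi_2$ and there exist $y$, a path $p$ and $l$ with $p(0)=y$, $p(l)=x$, $y\models\phi_1$ and $p(i)\models\phi_2$ for all $0<i<l$. *)

theory Defs
  imports Main
begin

text \<open>Closure spaces: the carrier X is the universe of the type 'a.\<close>

definition closure_space :: "('a set \<Rightarrow> 'a set) \<Rightarrow> bool" where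
  "closure_space C \<longleftrightarrow> C {} = {} \<and> (\<forall>A. A \<subseteq> C A) \<and> (\<forall>A B. C (A \<union> B) = C A \<union> C B)"

definition closure_rel :: "('a \<times> 'a) set \<Rightarrow> 'a set \<Rightarrow> 'a set" where
  "closure_rel R A = A \<union> {x. \<exists>a\<in>A. (a, x) \<in> R}"

definition quasi_discrete :: "('a set \<Rightarrow> 'a set) \<Rightarrow> bool" where
  "quasi_discrete C \<longleftrightarrow> closure_space C \<and> (\<exists>R. C = closure_rel R)"

definition succ_rel :: "(nat \<times> nat) set" where
  "succ_rel = {(n, Suc n) | n. True}"

definition cont_closure :: "('a set \<Rightarrow> 'a set) \<Rightarrow> ('b set \<Rightarrow> 'b set) \<Rightarrow> ('a \<Rightarrow> 'b) \<Rightarrow> bool" where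
  "cont_closure C1 C2 f \<longleftrightarrow> (\<forall>A. f ` (C1 A) \<subseteq> C2 (f ` A))"

definition is_path :: "('a set \<Rightarrow> 'a set) \<Rightarrow> (nat \<Rightarrow> 'a) \<Rightarrow> bool" where
  "is_path C p \<longleftrightarrow> cont_closure (closure_rel succ_rel) C p"

datatype 'p slcs =
    Atom 'p
  | Top
  | Neg "'p slcs"
  | Conj "'p slcs" "'p slcs"
  | Near "'p slcs"
  | Surr "'p slcs" "'p slcs"
  | Reach "'p slcs" "'p slcs"

primrec sat :: "('a set \<Rightarrow> 'a set) \<Rightarrow> ('p \<Rightarrow> 'a set) \<Rightarrow> 'a \<Rightarrow> 'p slcs \<Rightarrow> bool" where
  "sat C V x (Atom a) \<longleftrightarrow> x \<in> V a"
| "sat C V x Top \<longleftrightarrow> True"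
| "sat C V x (Neg \<phi>) \<longleftrightarrow> \<not> sat C V x \<phi>"
| "sat C V x (Conj \<phi> \<psi>) \<longleftrightarrow> sat C V x \<phi> \<and> sat C V x \<psi>"
| "sat C V x (Near \<phi>) \<longleftrightarrow> x \<in> C {y. sat C V y \<phi>}"
| "sat C V x (Surr \<phi>1 \<phi>2) \<longleftrightarrow> sat C V x \<phi>1 \<and>
     (\<forall>p l. is_path C p \<and> p 0 = x \<and> \<not> sat C V (p l) \<phi>1 \<longrightarrow>
        (\<exists>k. 0 < k \<and> k \<le> l \<and> sat C V (p k) \<phi>2))"
| "sat C V x (Reach \<phi>1 \<phi>2) \<longleftrightarrow> sat C V x \<phi>2 \<and>
     (\<exists>y p l. is_path C p \<and> p 0 = y \<and> p l = x \<and> sat C V y \<phi>1 \<and>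
        (\<forall>i. 0 < i \<and> i < l \<longrightarrow> sat C V (p i) \<phi>2))"

end

theory Submission
  imports Defs
begin

text \<open>
  In a quasi-discrete space a path is just a sequence in which each point either repeats
  its predecessor or is an R-successor of it. Given a surrounding set A, induction along
  such a path shows that it cannot leave A without first stepping onto its boundary
  C A - A, where \<phi>2 holds. Conversely, the set of points reachable from x by paths that
  avoid \<phi>2 after the start is a surrounding set: every point of it satisfies \<phi>1 by the
  semantics of surrounding, and every R-successor of it outside it satisfies \<phi>2, since
  otherwise the path could be prolonged by one step.
\<close>

lemma closure_rel_succ_rel: "closure_rel succ_rel A = A \<union> Suc ` A"
  unfolding closure_rel_def succ_rel_def by auto

lemma is_path_closure_rel_iff:
  "is_path (closure_rel R) p \<longleftrightarrow> (\<forall>n. p (Suc n) = p n \<or> (p n, p (Suc n)) \<in> R)"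
proof
  assume path: "is_path (closure_rel R) p"
  show "\<forall>n. p (Suc n) = p n \<or> (p n, p (Suc n)) \<in> R"
  proof
    fix n
    have "p ` closure_rel succ_rel {n} \<subseteq> closure_rel R (p ` {n})"
      using path unfolding is_path_def cont_closure_def by blast
    then show "p (Suc n) = p n \<or> (p n, p (Suc n)) \<in> R"
      unfolding closure_rel_succ_rel by (auto simp: closure_rel_def)
  qed
next
  assume "\<forall>n. p (Suc n) = p n \<or> (p n, p (Suc n)) \<in> R"
  then show "is_path (closure_rel R) p"
    unfolding is_path_def cont_closure_def closure_rel_succ_rel
    by (fastforce simp: closure_rel_def)
qed

lemma is_path_const: "is_path (closure_rel R) (\<lambda>_. x)"
  by (simp add: is_path_closure_rel_iff)

lemma is_path_append_step:
  assumes "is_path (closure_rel R) p" and "(p l, z) \<in> R"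
  shows "is_path (closure_rel R) (\<lambda>n. if n \<le> l then p n else z)"
  unfolding is_path_closure_rel_iff
proof
  fix n
  consider "Suc n \<le> l" | "n = l" | "l < n" by linarith
  then show "(if Suc n \<le> l then p (Suc n) else z) = (if n \<le> l then p n else z) \<or>
    (if n \<le> l then p n else z, if Suc n \<le> l then p (Suc n) else z) \<in> R"
    using assms by cases (auto simp: is_path_closure_rel_iff)
qed

lemma is_path_stays_in_surrounding_set:
  assumes path: "is_path (closure_rel R) p" and "p 0 \<in> A"
    and boundary: "\<forall>z\<in>closure_rel R A - A. Q z"
    and avoid: "\<forall>k. 0 < k \<and> k \<le> l \<longrightarrow> \<not> Q (p k)"
    and "k \<le> l"
  shows "p k \<in> A"
  using \<open>k \<le> l\<close>
proof (induction k)
  case 0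
  then show ?case using \<open>p 0 \<in> A\<close> by simp
next
  case (Suc k)
  then have "p k \<in> A" by simp
  moreover have "p (Suc k) = p k \<or> (p k, p (Suc k)) \<in> R"
    using path by (simp add: is_path_closure_rel_iff)
  ultimately have "p (Suc k) \<in> closure_rel R A"
    unfolding closure_rel_def by auto
  moreover have "\<not> Q (p (Suc k))" using avoid Suc.prems by simp
  ultimately show ?case using boundary by blast
qed

definition reach_avoiding :: "('a set \<Rightarrow> 'a set) \<Rightarrow> ('a \<Rightarrow> bool) \<Rightarrow> 'a \<Rightarrow> 'a set" where
  "reach_avoiding C Q x = {y. \<exists>p l. is_path C p \<and> p 0 = x \<and> p l = y \<and>
      (\<forall>k. 0 < k \<and> k \<le> l \<longrightarrow> \<not> Q (p k))}"

lemma start_in_reach_avoiding: "x \<in> reach_avoiding (closure_rel R) Q x"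
  unfolding reach_avoiding_def using is_path_const by fastforce

lemma boundary_of_reach_avoiding:
  "\<forall>z\<in>closure_rel R (reach_avoiding (closure_rel R) Q x) - reach_avoiding (closure_rel R) Q x. Q z"
proof (rule ballI, rule ccontr)
  fix z
  assume z: "z \<in> closure_rel R (reach_avoiding (closure_rel R) Q x) - reach_avoiding (closure_rel R) Q x"
    and "\<not> Q z"
  from z obtain a where a: "a \<in> reach_avoiding (closure_rel R) Q x" "(a, z) \<in> R"
    "z \<notin> reach_avoiding (closure_rel R) Q x"
    unfolding closure_rel_def by auto
  then obtain p l where p: "is_path (closure_rel R) p" "p 0 = x" "p l = a"
    "\<forall>k. 0 < k \<and> k \<le> l \<longrightarrow> \<not> Q (p k)"
    unfolding reach_avoiding_def by blast
  define q where "q = (\<lambda>n. if n \<le> l then p n else z)"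
  have "is_path (closure_rel R) q"
    unfolding q_def using p a by (intro is_path_append_step) auto
  moreover have "q 0 = x" "q (Suc l) = z" using p by (simp_all add: q_def)
  moreover have "\<forall>k. 0 < k \<and> k \<le> Suc l \<longrightarrow> \<not> Q (q k)"
    using p(4) \<open>\<not> Q z\<close> by (auto simp: q_def le_Suc_eq)
  ultimately have "z \<in> reach_avoiding (closure_rel R) Q x"
    unfolding reach_avoiding_def by blast
  with a(3) show False by contradiction
qed

lemma surrounded_iff_surrounding_set:
  "(P x \<and> (\<forall>p l. is_path (closure_rel R) p \<and> p 0 = x \<and> \<not> P (p l) \<longrightarrow>
       (\<exists>k. 0 < k \<and> k \<le> l \<and> Q (p k)))) \<longleftrightarrow>
   (\<exists>A. x \<in> A \<and> (\<forall>y\<in>A. P y) \<and> (\<forall>z\<in>closure_rel R A - A. Q z))"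
  (is "?surrounded \<longleftrightarrow> _")
proof
  assume ?surrounded
  let ?A = "reach_avoiding (closure_rel R) Q x"
  have "\<forall>y\<in>?A. P y"
    using \<open>?surrounded\<close> unfolding reach_avoiding_def by blast
  with start_in_reach_avoiding boundary_of_reach_avoiding
  show "\<exists>A. x \<in> A \<and> (\<forall>y\<in>A. P y) \<and> (\<forall>z\<in>closure_rel R A - A. Q z)"
    by (intro exI[of _ ?A] conjI)
next
  assume "\<exists>A. x \<in> A \<and> (\<forall>y\<in>A. P y) \<and> (\<forall>z\<in>closure_rel R A - A. Q z)"
  then obtain A where "x \<in> A" and inside: "\<forall>y\<in>A. P y"
    and boundary: "\<forall>z\<in>closure_rel R A - A. Q z" by blast
  have "\<exists>k. 0 < k \<and> k \<le> l \<and> Q (p k)"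
    if "is_path (closure_rel R) p" "p 0 = x" "\<not> P (p l)" for p l
    using is_path_stays_in_surrounding_set[of R p A Q l l] that \<open>x \<in> A\<close> inside boundary
    by auto
  then show ?surrounded using \<open>x \<in> A\<close> inside by blast
qed

theorem theorem3p7:
  fixes C :: "'a set \<Rightarrow> 'a set" and V :: "'p \<Rightarrow> 'a set"
    and x :: 'a and \<phi>1 \<phi>2 :: "'p slcs"
  assumes "quasi_discrete C"
  shows "sat C V x (Surr \<phi>1 \<phi>2) \<longleftrightarrow>
    (\<exists>A. x \<in> A \<and> (\<forall>y\<in>A. sat C V y \<phi>1) \<and> (\<forall>z\<in>C A - A. sat C V z \<phi>2))"
proof -
  obtain R where "C = closure_rel R"
    using assms unfolding quasi_discrete_def by blast
  then show ?thesis
    using surrounded_iff_surrounding_set[of "\<lambda>y. sat C V y \<phi>1" x R "\<lambda>y. sat C V y \<phi>2"]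
    by simp
qed

end
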